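(* Let $k\ge 2$ be an integer and define distributions $\mathbf{p},\mathbf{q}$ on $[k]=\{1,\dots,k\}$ as follows. If $k$ is even: $\mathbf{p}_i=0$ for even $i$, $\mathbf{p}_i=\frac{1}{2^{k-1}}\binom{k}{i}$ for odd $i$; $\mathbf{q}_i=\frac{1}{2^{k-1}-1}\binom{k}{i}$ for even $i$, $\mathbf{q}_i=0$ for odd $i$. If $k$ is odd: $\mathbf{p}_i=\frac{1}{2^{k-1}-1}\binom{k}{i}$ for even $i$, $\mathbf{p}_i=0$ for odd $i$; $\mathbf{q}_i=0$ for even $i$, $\mathbf{q}_i=\frac{1}{2^{k-1}}\binom{k}{i}$ for odd $i$. Then: (1) $\mathbf{p}_k=0$ and $\mathbf{q}_k\ge \frac{1}{2^k}$; (2) for any random variables $X_A\sim\mathbf{p}$ and $X_B\sim\mathbf{q}$, $X_A$ and $X_B$ have $k-1$ proportional moments.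
   Context: Two random variables $X_1,X_2$ have $k-1$ proportional moments if $\frac{\mathbf{E}[X_2]}{\mathbf{E}[X_1]}=\frac{\mathbf{E}[X_2^2]}{\mathbf{E}[X_1^2]}=\cdots=\frac{\mathbf{E}[X_2^{k-1}]}{\mathbf{E}[X_1^{k-1}]}$. *)

theory Defs
  imports "HOL-Probability.Probability"
begin

definition pA :: "nat \<Rightarrow> nat \<Rightarrow> real" where
  "pA k i = (if i < 1 \<or> i > k then 0
             else if even k then (if even i then 0 else real (k choose i) / 2 ^ (k - 1))
             else (if even i then real (k choose i) / (2 ^ (k - 1) - 1) else 0))"

definition qB :: "nat \<Rightarrow> nat \<Rightarrow> real" where
  "qB k i = (if i < 1 \<or> i > k then 0
             else if even k then (if even i then real (k choose i) / (2 ^ (k - 1) - 1) else 0)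
             else (if even i then 0 else real (k choose i) / 2 ^ (k - 1)))"

definition proportional_moments ::
  "'a measure \<Rightarrow> ('a \<Rightarrow> real) \<Rightarrow> 'b measure \<Rightarrow> ('b \<Rightarrow> real) \<Rightarrow> nat \<Rightarrow> bool" where
  "proportional_moments M1 X1 M2 X2 m \<longleftrightarrow>
     (\<forall>j\<in>{1..m}. \<forall>l\<in>{1..m}.
        (\<integral>\<omega>. X2 \<omega> ^ j \<partial>M2) / (\<integral>\<omega>. X1 \<omega> ^ j \<partial>M1)
      = (\<integral>\<omega>. X2 \<omega> ^ l \<partial>M2) / (\<integral>\<omega>. X1 \<omega> ^ l \<partial>M1))"

end

theory Submission
  imports Defs
begin

text \<open>For \<open>0 < j < k\<close> the alternating sum \<open>\<Sum>i\<le>k. (-1)^i (k choose i) i^j\<close> vanishes, being the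
  \<open>k\<close>-th finite difference of a polynomial of degree \<open>j < k\<close>. Hence the binomial power sums
  \<open>\<Sum> (k choose i) i^j\<close> over the even and over the odd \<open>i \<in> [k]\<close> agree. Both \<open>p\<close> and \<open>q\<close> are
  \<open>k choose i\<close> restricted to one parity class of \<open>[k]\<close> and normalised, so their \<open>j\<close>-th moments
  are this common sum divided by the respective normalising constant, and the ratio of the
  moments does not depend on \<open>j\<close>.\<close>

lemma alternating_binomial_sum_Suc:
  fixes f :: "nat \<Rightarrow> 'a::comm_ring_1"
  shows "(\<Sum>i\<le>Suc n. (-1)^i * of_nat (Suc n choose i) * f i) =
         (\<Sum>i\<le>n. (-1)^i * of_nat (n choose i) * (f i - f (Suc i)))"
proof -
  have "(\<Sum>i\<le>Suc n. (-1)^i * of_nat (Suc n choose i) * f i) =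
          f 0 - (\<Sum>i\<le>n. (-1)^i * of_nat (n choose i) * f (Suc i))
              - (\<Sum>i\<le>n. (-1)^i * of_nat (n choose Suc i) * f (Suc i))"
    by (simp only: sum.atMost_Suc_shift binomial_Suc_Suc of_nat_add ring_distribs sum.distrib)
       (simp add: sum_negf del: sum.atMost_Suc)
  also have "(\<Sum>i\<le>n. (-1)^i * of_nat (n choose Suc i) * f (Suc i))
           = f 0 - (\<Sum>i\<le>Suc n. (-1)^i * of_nat (n choose i) * f i)"
    by (simp add: sum.atMost_Suc_shift sum_negf del: sum.atMost_Suc)
  finally show ?thesis
    by (simp add: right_diff_distrib sum_subtractf binomial_eq_0)
qed

lemma alternating_binomial_sum_power_eq_0:
  assumes "j < n"
  shows "(\<Sum>i\<le>n. (-1)^i * of_nat (n choose i) * of_nat i ^ j :: 'a::comm_ring_1) = 0"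
  using assms
proof (induction n arbitrary: j)
  case 0
  then show ?case by simp
next
  case (Suc n)
  have "of_nat (Suc i) ^ j = (\<Sum>t<j. of_nat (j choose t) * of_nat i ^ t) + (of_nat i ^ j :: 'a)" for i
    using binomial_ring[of "of_nat i :: 'a" 1 j] by (simp add: lessThan_Suc_atMost[symmetric] add.commute)
  then have difference: "(-1)^i * of_nat (n choose i) * (of_nat i ^ j - of_nat (Suc i) ^ j) =
      - (\<Sum>t<j. of_nat (j choose t) * ((-1)^i * of_nat (n choose i) * (of_nat i ^ t :: 'a)))" for i
    by (simp add: sum_distrib_left algebra_simps sum_negf)
  have "(\<Sum>i\<le>Suc n. (-1)^i * of_nat (Suc n choose i) * (of_nat i ^ j :: 'a))
      = - (\<Sum>i\<le>n. \<Sum>t<j. of_nat (j choose t) * ((-1)^i * of_nat (n choose i) * of_nat i ^ t))"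
    by (simp only: alternating_binomial_sum_Suc[where f = "\<lambda>i. of_nat i ^ j"] difference sum_negf)
  also have "\<dots> = - (\<Sum>t<j. of_nat (j choose t) * (\<Sum>i\<le>n. (-1)^i * of_nat (n choose i) * of_nat i ^ t))"
    by (subst sum.swap) (simp add: sum_distrib_left)
  also have "\<dots> = 0"
    using Suc by simp
  finally show ?case .
qed

lemma (in prob_space) integral_comp_eq_sum_distribution:
  fixes X :: "'a \<Rightarrow> 'b::countable" and g :: "'b \<Rightarrow> real"
  assumes X: "X \<in> measurable M (count_space UNIV)"
    and distribution: "\<And>i. measure M {\<omega> \<in> space M. X \<omega> = i} = f i"
    and "finite S" and support: "\<And>i. i \<notin> S \<Longrightarrow> f i = 0"
  shows "(\<integral>\<omega>. g (X \<omega>) \<partial>M) = (\<Sum>i\<in>S. g i * f i)"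
proof -
  let ?A = "\<lambda>i. {\<omega> \<in> space M. X \<omega> = i}"
  have A_sets: "?A i \<in> sets M" for i
    using measurable_sets[OF X, of "{i}"] by (simp add: vimage_def Int_def conj_commute)
  have "(\<Union>i\<in>-S. ?A i) \<in> null_sets M"
    using A_sets distribution support by (intro null_sets_UN') (auto simp: emeasure_eq_measure)
  then have "AE \<omega> in M. X \<omega> \<in> S"
    by (rule AE_I') auto
  then have "AE \<omega> in M. g (X \<omega>) = (\<Sum>i\<in>S. g i * indicator (?A i) \<omega>)"
    using AE_space by eventually_elim (simp add: indicator_def \<open>finite S\<close> if_distrib sum.If_cases)
  then have "(\<integral>\<omega>. g (X \<omega>) \<partial>M) = (\<integral>\<omega>. (\<Sum>i\<in>S. g i * indicator (?A i) \<omega>) \<partial>M)"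
    using A_sets by (intro integral_cong_AE measurable_compose[OF X]) auto
  also have "\<dots> = (\<Sum>i\<in>S. g i * f i)"
    using A_sets distribution by (simp add: emeasure_eq_measure)
  finally show ?thesis .
qed

lemma proportional_momentsI:
  assumes "\<And>j. j \<in> {1..m} \<Longrightarrow> (\<integral>\<omega>. X2 \<omega> ^ j \<partial>M2) = c * (\<integral>\<omega>. X1 \<omega> ^ j \<partial>M1)"
    and "\<And>j. j \<in> {1..m} \<Longrightarrow> (\<integral>\<omega>. X1 \<omega> ^ j \<partial>M1) \<noteq> 0"
  shows "proportional_moments M1 X1 M2 X2 m"
  using assms by (simp add: proportional_moments_def)

lemma pA_self_eq_0: "pA k k = 0"
  by (simp add: pA_def)

lemma qB_self_ge:
  assumes "1 \<le> k"
  shows "1 / 2 ^ k \<le> qB k k"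
proof -
  have "(2::real) ^ k = 2 * 2 ^ (k - 1)"
    using assms by (simp flip: power_Suc)
  moreover have "2 ^ (k - 1) \<ge> (2::real)" if "even k"
    using that assms power_increasing[of 1 "k - 1" "2::real"] by (cases "k = 1") auto
  ultimately show ?thesis
    using assms by (auto simp: qB_def intro!: divide_left_mono)
qed

definition odd_binomial_power_sum :: "nat \<Rightarrow> nat \<Rightarrow> real" where
  "odd_binomial_power_sum k j = (\<Sum>i\<in>{1..k}. if odd i then real (k choose i) * real i ^ j else 0)"

lemma odd_binomial_power_sum_pos: "1 \<le> k \<Longrightarrow> 0 < odd_binomial_power_sum k j"
  unfolding odd_binomial_power_sum_def
  by (rule sum_pos2[of _ 1]) auto

lemma even_binomial_power_sum_eq_odd:
  assumes "0 < j" "j < k"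
  shows "(\<Sum>i\<in>{1..k}. if even i then real (k choose i) * real i ^ j else 0) = odd_binomial_power_sum k j"
proof -
  have "{..k} = insert 0 {1..k}" by auto
  then have "(\<Sum>i\<in>{1..k}. (-1)^i * real (k choose i) * real i ^ j) = 0"
    using alternating_binomial_sum_power_eq_0[OF \<open>j < k\<close>, where 'a = real] \<open>0 < j\<close> by (simp add: zero_power)
  moreover have "(\<Sum>i\<in>{1..k}. (-1)^i * real (k choose i) * real i ^ j) =
      (\<Sum>i\<in>{1..k}. if even i then real (k choose i) * real i ^ j else 0) - odd_binomial_power_sum k j"
    unfolding odd_binomial_power_sum_def sum_subtractf[symmetric] by (intro sum.cong) auto
  ultimately show ?thesis by simp
qed

lemma pA_qB_moments:
  assumes "2 \<le> k"
  obtains a b :: real where "0 < a" "0 < b"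
    and "\<And>j. 0 < j \<Longrightarrow> j < k \<Longrightarrow> (\<Sum>i\<in>{1..k}. real i ^ j * pA k i) = odd_binomial_power_sum k j / a"
    and "\<And>j. 0 < j \<Longrightarrow> j < k \<Longrightarrow> (\<Sum>i\<in>{1..k}. real i ^ j * qB k i) = odd_binomial_power_sum k j / b"
proof -
  have "(2::real) \<le> 2 ^ (k - 1)"
    using assms power_increasing[of 1 "k - 1" "2::real"] by simp
  then have pos: "0 < (2::real) ^ (k - 1)" "0 < (2::real) ^ (k - 1) - 1" by simp_all
  define even_sum where
    "even_sum j = (\<Sum>i\<in>{1..k}. if even i then real (k choose i) * real i ^ j else 0)" for j
  have pA_sum: "(\<Sum>i\<in>{1..k}. real i ^ j * pA k i) =
      (if even k then odd_binomial_power_sum k j / 2 ^ (k - 1) else even_sum j / (2 ^ (k - 1) - 1))" for j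
    by (auto simp: pA_def even_sum_def odd_binomial_power_sum_def sum_divide_distrib intro!: sum.cong)
  have qB_sum: "(\<Sum>i\<in>{1..k}. real i ^ j * qB k i) =
      (if even k then even_sum j / (2 ^ (k - 1) - 1) else odd_binomial_power_sum k j / 2 ^ (k - 1))" for j
    by (auto simp: qB_def even_sum_def odd_binomial_power_sum_def sum_divide_distrib intro!: sum.cong)
  have "even_sum j = odd_binomial_power_sum k j" if "0 < j" "j < k" for j
    unfolding even_sum_def using that by (rule even_binomial_power_sum_eq_odd)
  then show ?thesis
    using that[OF pos] that[OF pos(2,1)] pA_sum qB_sum by (cases "even k") simp_all
qed

theorem lemma3:
  fixes k :: nat
  assumes "k \<ge> 2"
  shows "(pA k k = 0 \<and> qB k k \<ge> 1 / 2 ^ k) \<and>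
         (\<forall>(MA :: 'a measure) (XA :: 'a \<Rightarrow> nat) (MB :: 'b measure) (XB :: 'b \<Rightarrow> nat).
           prob_space MA \<longrightarrow> XA \<in> measurable MA (count_space UNIV) \<longrightarrow>
           (\<forall>i. measure MA {\<omega> \<in> space MA. XA \<omega> = i} = pA k i) \<longrightarrow>
           prob_space MB \<longrightarrow> XB \<in> measurable MB (count_space UNIV) \<longrightarrow>
           (\<forall>i. measure MB {\<omega> \<in> space MB. XB \<omega> = i} = qB k i) \<longrightarrow>
           proportional_moments MA (\<lambda>\<omega>. real (XA \<omega>)) MB (\<lambda>\<omega>. real (XB \<omega>)) (k - 1))"
proof (intro conjI allI impI)
  show "pA k k = 0" "qB k k \<ge> 1 / 2 ^ k"
    using assms by (simp_all add: pA_self_eq_0 qB_self_ge)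
  obtain a b where ab: "0 < a" "0 < b"
    and pA_moment: "\<And>j. 0 < j \<Longrightarrow> j < k \<Longrightarrow> (\<Sum>i\<in>{1..k}. real i ^ j * pA k i) = odd_binomial_power_sum k j / a"
    and qB_moment: "\<And>j. 0 < j \<Longrightarrow> j < k \<Longrightarrow> (\<Sum>i\<in>{1..k}. real i ^ j * qB k i) = odd_binomial_power_sum k j / b"
    using pA_qB_moments[OF assms] by blast
  fix MA :: "'a measure" and XA :: "'a \<Rightarrow> nat" and MB :: "'b measure" and XB :: "'b \<Rightarrow> nat"
  assume XA: "prob_space MA" "XA \<in> measurable MA (count_space UNIV)"
    "\<forall>i. measure MA {\<omega> \<in> space MA. XA \<omega> = i} = pA k i"
    and XB: "prob_space MB" "XB \<in> measurable MB (count_space UNIV)"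
    "\<forall>i. measure MB {\<omega> \<in> space MB. XB \<omega> = i} = qB k i"
  have EA: "(\<integral>\<omega>. real (XA \<omega>) ^ j \<partial>MA) = (\<Sum>i\<in>{1..k}. real i ^ j * pA k i)" for j
    using XA by (intro prob_space.integral_comp_eq_sum_distribution) (auto simp: pA_def)
  have EB: "(\<integral>\<omega>. real (XB \<omega>) ^ j \<partial>MB) = (\<Sum>i\<in>{1..k}. real i ^ j * qB k i)" for j
    using XB by (intro prob_space.integral_comp_eq_sum_distribution) (auto simp: qB_def)
  show "proportional_moments MA (\<lambda>\<omega>. real (XA \<omega>)) MB (\<lambda>\<omega>. real (XB \<omega>)) (k - 1)"
  proof (rule proportional_momentsI[where c = "a / b"])
    fix j assume "j \<in> {1..k - 1}"
    then have "0 < j" "j < k" by auto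
    with EA EB pA_moment qB_moment ab odd_binomial_power_sum_pos[of k j] assms
    show "(\<integral>\<omega>. real (XB \<omega>) ^ j \<partial>MB) = a / b * (\<integral>\<omega>. real (XA \<omega>) ^ j \<partial>MA)"
      and "(\<integral>\<omega>. real (XA \<omega>) ^ j \<partial>MA) \<noteq> 0"
      by simp_all
  qed
qed
end
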